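(* For $r\ge1$, in $\mathcal H^{\mathsf c}_{r,R}$ one has $$x_{(r)}\,c_{q,r}=c'_{q,r}\,x_{(r)},$$ and, when $q$ is invertible in $R$, $y_{(r)}\,c'_{q,r}=c_{q,r}\,y_{(r)}$.
   Context: Let $R$ be a commutative ring in which $2$ is not a zero divisor, and $q\in R$. $\mathcal H^{\mathsf c}_{r,R}$ is the associative $R$-superalgebra with even generators $T_1,\dots,T_{r-1}$ and odd generators $c_1,\dots,c_r$ subject to: $c_i^2=-1$, $c_ic_j=-c_jc_i$ ($i\ne j$); $(T_i-q)(T_i+1)=0$; $T_iT_{i'}=T_{i'}T_i$ for $|i-i'|>1$; $T_iT_{i+1}T_i=T_{i+1}T_iT_{i+1}$; $T_ic_j=c_jT_i$ for $j\ne i,i+1$; $T_ic_i=c_{i+1}T_i$; $T_ic_{i+1}=c_iT_i-(q-1)(c_i-c_{i+1})$. $T_w$ is defined via reduced expressions. $x_{(r)}=\sum_{w\in\mathfrak S_r}T_w$ and $y_{(r)}=\sum_{w\in\mathfrak S_r}(-q^{-1})^{\ell(w)}T_w$. Further $c_{q,r}=q^{r-1}c_1+q^{r-2}c_2+\cdots+qc_{r-1}+c_r$ and $c'_{q,r}=c_1+qc_2+\cdots+q^{r-1}c_r$. *)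

theory Defs
  imports "HOL-Combinatorics.Combinatorics"
begin

definition perm_length :: "nat \<Rightarrow> (nat \<Rightarrow> nat) \<Rightarrow> nat" where
  "perm_length r w = card {(i, j). 1 \<le> i \<and> i < j \<and> j \<le> r \<and> w j < w i}"

definition simple_trans :: "nat \<Rightarrow> nat \<Rightarrow> nat" where
  "simple_trans i = transpose i (Suc i)"

definition reduced_word :: "nat \<Rightarrow> (nat \<Rightarrow> nat) \<Rightarrow> nat list \<Rightarrow> bool" where
  "reduced_word r w ws \<longleftrightarrow>
     set ws \<subseteq> {1..<r} \<and> length ws = perm_length r w \<and>
     foldr (\<lambda>i f. simple_trans i \<circ> f) ws id = w"

definition Tw :: "nat \<Rightarrow> (nat \<Rightarrow> 'a::monoid_mult) \<Rightarrow> (nat \<Rightarrow> nat) \<Rightarrow> 'a" where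
  "Tw r T w = prod_list (map T (SOME ws. reduced_word r w ws))"

definition x_sym :: "nat \<Rightarrow> (nat \<Rightarrow> 'a::ring_1) \<Rightarrow> 'a" where
  "x_sym r T = (\<Sum>w\<in>{w. w permutes {1..r}}. Tw r T w)"

text \<open>y_(r) = sum (-q^{-1})^{l(w)} T_w, with qinv the image of q^{-1}.\<close>
definition y_sym :: "nat \<Rightarrow> 'a::ring_1 \<Rightarrow> (nat \<Rightarrow> 'a) \<Rightarrow> 'a" where
  "y_sym r qinv T = (\<Sum>w\<in>{w. w permutes {1..r}}. (- qinv) ^ perm_length r w * Tw r T w)"

definition c_q :: "nat \<Rightarrow> 'a::ring_1 \<Rightarrow> (nat \<Rightarrow> 'a) \<Rightarrow> 'a" where
  "c_q r q c = (\<Sum>k=1..r. q ^ (r - k) * c k)"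

definition c_q' :: "nat \<Rightarrow> 'a::ring_1 \<Rightarrow> (nat \<Rightarrow> 'a) \<Rightarrow> 'a" where
  "c_q' r q c = (\<Sum>k=1..r. q ^ (k - 1) * c k)"

text \<open>The defining relations of the Hecke-Clifford superalgebra H^c_{r,R}, for an
  R-algebra A with structure map phi (central ring homomorphism R -> A).\<close>
definition HC_relations :: "nat \<Rightarrow> 'a::ring_1 \<Rightarrow> (nat \<Rightarrow> 'a) \<Rightarrow> (nat \<Rightarrow> 'a) \<Rightarrow> bool" where
  "HC_relations r q T c \<longleftrightarrow>
     (\<forall>i\<in>{1..r}. c i * c i = -1) \<and>
     (\<forall>i\<in>{1..r}. \<forall>j\<in>{1..r}. i \<noteq> j \<longrightarrow> c i * c j = - (c j * c i)) \<and>
     (\<forall>i\<in>{1..<r}. (T i - q) * (T i + 1) = 0) \<and>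
     (\<forall>i\<in>{1..<r}. \<forall>i'\<in>{1..<r}. (i + 1 < i' \<or> i' + 1 < i) \<longrightarrow> T i * T i' = T i' * T i) \<and>
     (\<forall>i. 1 \<le> i \<and> i + 1 < r \<longrightarrow> T i * T (i+1) * T i = T (i+1) * T i * T (i+1)) \<and>
     (\<forall>i\<in>{1..<r}. \<forall>j\<in>{1..r}. j \<noteq> i \<and> j \<noteq> i + 1 \<longrightarrow> T i * c j = c j * T i) \<and>
     (\<forall>i\<in>{1..<r}. T i * c i = c (i+1) * T i) \<and>
     (\<forall>i\<in>{1..<r}. T i * c (i+1) = c i * T i - (q - 1) * (c i - c (i+1)))"

definition central_ring_hom :: "('r::comm_ring_1 \<Rightarrow> 'a::ring_1) \<Rightarrow> bool" where
  "central_ring_hom \<phi> \<longleftrightarrow> \<phi> 1 = 1 \<and> (\<forall>x y. \<phi> (x + y) = \<phi> x + \<phi> y) \<and>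
     (\<forall>x y. \<phi> (x * y) = \<phi> x * \<phi> y) \<and> (\<forall>x a. \<phi> x * a = a * \<phi> x)"

end

theory Submission
  imports Defs
begin

(* Every permutation of {1..m+1} factors uniquely as w o s_m ... s_k with w fixing m+1 and
   lengths adding, so x_(m+1) = x_(m) * (sum over k of T_m ... T_k), and similarly for y_(m+1)
   with weights (-q^-1)^(m+1-k); that T_w does not depend on the reduced expression is
   Matsumoto's theorem.  By induction on m: x_(m) T_a = q x_(m) for a < m, the c_j with j > m
   commute with x_(m), and x_(m) c_(q,m) = c'_(q,m) x_(m); for y_(m) the generators T_a act by -1
   instead of q.  In the inductive step each c_j is pushed through T_m ... T_k with the mixed
   relations and picks up one correction term at T_j, which is absorbed into x_(m) up to a power
   of the eigenvalue.  Moving every correction term to the row of the double sum it belongs to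
   leaves identities between scalars of R, which are finite geometric sums. *)

section \<open>Coxeter length and reduced words\<close>

definition word_perm :: "nat list \<Rightarrow> nat \<Rightarrow> nat" where
  "word_perm ws = foldr (\<lambda>i f. simple_trans i \<circ> f) ws id"

lemma word_perm_simps [simp]:
  "word_perm [] = id" "word_perm (i # ws) = simple_trans i \<circ> word_perm ws"
  by (simp_all add: word_perm_def)

lemma word_perm_append: "word_perm (xs @ ys) = word_perm xs \<circ> word_perm ys"
  by (induction xs) auto

lemma reduced_word_iff:
  "reduced_word r w ws \<longleftrightarrow>
     set ws \<subseteq> {1..<r} \<and> length ws = perm_length r w \<and> word_perm ws = w"
  by (simp add: reduced_word_def word_perm_def)

lemma reduced_word_length: "reduced_word r w ws \<Longrightarrow> length ws = perm_length r w"
  by (simp add: reduced_word_iff)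

lemma simple_trans_apply:
  "simple_trans i x = (if x = i then Suc i else if x = Suc i then i else x)"
  by (auto simp: simple_trans_def transpose_def)

lemma simple_trans_simple_trans [simp]:
  "simple_trans i (simple_trans i x) = x" "simple_trans i \<circ> simple_trans i = id"
  by (simp_all add: simple_trans_def)

lemma inv_simple_trans [simp]: "inv (simple_trans i) = simple_trans i"
  by (simp add: simple_trans_def)

lemma simple_trans_permutes: "1 \<le> i \<Longrightarrow> i < r \<Longrightarrow> simple_trans i permutes {1..r}"
  unfolding simple_trans_def by (rule permutes_swap_id) auto

lemma simple_trans_less_iff:
  assumes "\<not> (u = i \<and> v = Suc i)" "\<not> (u = Suc i \<and> v = i)"
  shows "simple_trans i u < simple_trans i v \<longleftrightarrow> u < v"
  using assms by (auto simp: simple_trans_apply)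

lemma word_perm_permutes: "set ws \<subseteq> {1..<r} \<Longrightarrow> word_perm ws permutes {1..r}"
proof (induction ws)
  case (Cons i ws)
  then have "word_perm ws permutes {1..r}" "simple_trans i permutes {1..r}"
    using simple_trans_permutes[of i r] by auto
  then show ?case by (simp only: word_perm_simps permutes_compose)
qed (simp add: permutes_id)

lemma inv_simple_trans_comp:
  assumes "w permutes {1..r}" "1 \<le> i" "i < r"
  shows "inv (simple_trans i \<circ> w) = inv w \<circ> simple_trans i"
  using o_inv_distrib[OF permutes_bij[OF simple_trans_permutes] permutes_bij] assms by simp

lemma inv_simple_trans_comp_apply:
  "w permutes {1..r} \<Longrightarrow> 1 \<le> i \<Longrightarrow> i < r \<Longrightarrow> inv (simple_trans i \<circ> w) x = inv w (simple_trans i x)"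
  by (simp add: inv_simple_trans_comp)

lemma simple_trans_comp_permutes:
  "w permutes {1..r} \<Longrightarrow> 1 \<le> i \<Longrightarrow> i < r \<Longrightarrow> simple_trans i \<circ> w permutes {1..r}"
  by (blast intro: permutes_compose simple_trans_permutes)

definition inversions :: "nat \<Rightarrow> (nat \<Rightarrow> nat) \<Rightarrow> (nat \<times> nat) set" where
  "inversions r w = {(i, j). 1 \<le> i \<and> i < j \<and> j \<le> r \<and> w j < w i}"

lemma finite_inversions [simp]: "finite (inversions r w)"
  by (rule finite_subset[of _ "{1..r} \<times> {1..r}"]) (auto simp: inversions_def)

lemma perm_length_eq_card_inversions: "perm_length r w = card (inversions r w)"
  by (simp add: perm_length_def inversions_def)

lemma perm_length_id [simp]: "perm_length r id = 0"
proof -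
  have "inversions r id = {}" by (auto simp: inversions_def)
  then show ?thesis by (simp add: perm_length_eq_card_inversions)
qed

(* inv w i < inv w (Suc i) says that i is a left ascent of w.  Left multiplication by s_i
   exchanges the values i and i + 1, so the inversion set only changes at their positions. *)
lemma perm_length_simple_trans_ascent:
  assumes w: "w permutes {1..r}" and i: "1 \<le> i" "i < r" and asc: "inv w i < inv w (Suc i)"
  shows "perm_length r (simple_trans i \<circ> w) = Suc (perm_length r w)"
proof -
  define a where "a = inv w i"
  define b where "b = inv w (Suc i)"
  have a: "a \<in> {1..r}" and b: "b \<in> {1..r}"
    unfolding a_def b_def using permutes_in_image[OF permutes_inv[OF w]] i by auto
  have ab: "a < b" using asc by (simp add: a_def b_def)
  have wa: "w a = i" and wb: "w b = Suc i"
    unfolding a_def b_def by (simp_all add: permutes_inverses(1)[OF w])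
  have order: "simple_trans i (w y) < simple_trans i (w x) \<longleftrightarrow> w y < w x"
    if "\<not> (x = a \<and> y = b)" "\<not> (x = b \<and> y = a)" for x y
  proof (rule simple_trans_less_iff)
    show "\<not> (w y = i \<and> w x = Suc i)" "\<not> (w y = Suc i \<and> w x = i)"
      using that permutes_inj[OF w] wa wb by (metis injD)+
  qed
  have "inversions r (simple_trans i \<circ> w) = insert (a, b) (inversions r w)"
  proof (rule set_eqI, clarify)
    fix x y
    show "(x, y) \<in> inversions r (simple_trans i \<circ> w) \<longleftrightarrow> (x, y) \<in> insert (a, b) (inversions r w)"
    proof (cases "x = a \<and> y = b")
      case True
      then show ?thesis using a b ab wa wb by (auto simp: inversions_def simple_trans_def)
    next
      case False
      show ?thesis
      proof (cases "x = b \<and> y = a")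
        case True
        then show ?thesis using ab by (auto simp: inversions_def)
      next
        case False': False
        show ?thesis using order[OF False False'] False by (auto simp: inversions_def)
      qed
    qed
  qed
  moreover have "(a, b) \<notin> inversions r w" using wa wb by (auto simp: inversions_def)
  ultimately show ?thesis by (simp add: perm_length_eq_card_inversions)
qed

lemma perm_length_simple_trans_descent:
  assumes w: "w permutes {1..r}" and i: "1 \<le> i" "i < r" and desc: "inv w (Suc i) < inv w i"
  shows "Suc (perm_length r (simple_trans i \<circ> w)) = perm_length r w"
proof -
  let ?v = "simple_trans i \<circ> w"
  have v: "?v permutes {1..r}" by (rule permutes_compose[OF w simple_trans_permutes[OF i]])
  have "inv ?v i < inv ?v (Suc i)"
    using desc by (simp add: inv_simple_trans_comp[OF w i] simple_trans_apply)
  from perm_length_simple_trans_ascent[OF v i this] show ?thesis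
    by (simp add: comp_assoc[symmetric])
qed

lemma perm_length_inv:
  assumes w: "w permutes {1..r}"
  shows "perm_length r (inv w) = perm_length r w"
proof -
  have wi: "inv w permutes {1..r}" using w by (rule permutes_inv)
  let ?f = "\<lambda>(a, b). (w b, w a)"
  have inj: "inj_on ?f (inversions r w)"
    using permutes_inj[OF w] by (auto simp: inj_on_def inj_def)
  have img: "?f ` inversions r w = inversions r (inv w)"
  proof (rule set_eqI, clarify)
    fix x y
    show "((x, y) \<in> ?f ` inversions r w) = ((x, y) \<in> inversions r (inv w))"
    proof
      assume "(x, y) \<in> ?f ` inversions r w"
      then obtain a b where ab: "(a, b) \<in> inversions r w" "x = w b" "y = w a" by auto
      have "a \<in> {1..r}" "b \<in> {1..r}" using ab(1) by (auto simp: inversions_def)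
      then have "w a \<in> {1..r}" "w b \<in> {1..r}" using permutes_in_image[OF w] by auto
      then show "(x, y) \<in> inversions r (inv w)" using ab permutes_inverses(2)[OF w]
        by (auto simp: inversions_def)
    next
      assume xy: "(x, y) \<in> inversions r (inv w)"
      have "x \<in> {1..r}" "y \<in> {1..r}" using xy by (auto simp: inversions_def)
      then have "inv w x \<in> {1..r}" "inv w y \<in> {1..r}" using permutes_in_image[OF wi] by auto
      then have "(inv w y, inv w x) \<in> inversions r w" using xy permutes_inverses(1)[OF w]
        by (auto simp: inversions_def)
      moreover have "?f (inv w y, inv w x) = (x, y)" using permutes_inverses(1)[OF w] by simp
      ultimately show "(x, y) \<in> ?f ` inversions r w" by (metis image_eqI)
    qed
  qed
  show ?thesis
    unfolding perm_length_eq_card_inversions img[symmetric] using card_image[OF inj] by simp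
qed

lemma perm_length_comp_simple_trans_ascent:
  assumes w: "w permutes {1..r}" and i: "1 \<le> i" "i < r" and asc: "w i < w (Suc i)"
  shows "perm_length r (w \<circ> simple_trans i) = Suc (perm_length r w)"
proof -
  have wi: "inv w permutes {1..r}" using w by (rule permutes_inv)
  have "inv (w \<circ> simple_trans i) = simple_trans i \<circ> inv w"
    using o_inv_distrib[OF permutes_bij[OF w] permutes_bij[OF simple_trans_permutes[OF i]]] by simp
  moreover have "w \<circ> simple_trans i permutes {1..r}"
    by (rule permutes_compose[OF simple_trans_permutes[OF i] w])
  ultimately show ?thesis
    using perm_length_simple_trans_ascent[OF wi i] asc perm_length_inv[OF w]
      perm_length_inv[of "w \<circ> simple_trans i"] by (simp add: permutes_inv_inv[OF w])
qed

lemma perm_length_word_perm_le: "set ws \<subseteq> {1..<r} \<Longrightarrow> perm_length r (word_perm ws) \<le> length ws"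
proof (induction ws)
  case (Cons i ws)
  then have w: "word_perm ws permutes {1..r}" and i: "1 \<le> i" "i < r"
    using word_perm_permutes[of ws r] by auto
  have "inv (word_perm ws) i \<noteq> inv (word_perm ws) (Suc i)"
    using permutes_inj[OF permutes_inv[OF w]] by (metis injD n_not_Suc_n)
  then have "perm_length r (simple_trans i \<circ> word_perm ws) \<le> Suc (perm_length r (word_perm ws))"
    using perm_length_simple_trans_ascent[OF w i] perm_length_simple_trans_descent[OF w i]
    by (cases "inv (word_perm ws) i < inv (word_perm ws) (Suc i)") auto
  with Cons show ?case by (simp add: comp_def)
qed simp

lemma perm_length_eq_0_imp_id:
  assumes w: "w permutes {1..r}" and len: "perm_length r w = 0"
  shows "w = id"
proof (rule ccontr)
  assume "w \<noteq> id"
  then obtain x where x: "w x \<noteq> x" and below: "\<And>y. y < x \<Longrightarrow> w y = y"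
    using exists_least_iff[of "\<lambda>x. w x \<noteq> x"] by (auto simp: fun_eq_iff)
  have xr: "x \<in> {1..r}" using x permutes_not_in[OF w] by blast
  define z where "z = inv w x"
  have wz: "w z = x" unfolding z_def using permutes_inverses(1)[OF w] .
  have zr: "z \<in> {1..r}"
    unfolding z_def using permutes_in_image[OF permutes_inv[OF w]] xr by simp
  have "x < z" using below wz x by (metis linorder_neqE_nat)
  moreover have "x < w x"
  proof (rule ccontr)
    assume "\<not> x < w x"
    then have "w (w x) = w x" using below x by simp
    then show False using x permutes_inj[OF w] by (metis injD)
  qed
  ultimately have "(x, z) \<in> inversions r w" using xr zr wz by (auto simp: inversions_def)
  then show False using len by (simp add: perm_length_eq_card_inversions)
qed

lemma exists_descent_between:
  fixes f :: "nat \<Rightarrow> nat"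
  shows "m \<le> n \<Longrightarrow> f n < f m \<Longrightarrow> \<exists>i. m \<le> i \<and> i < n \<and> f (Suc i) < f i"
proof (induction n)
  case (Suc n)
  show ?case
  proof (cases "f n < f m")
    case True
    with Suc obtain i where "m \<le> i" "i < n" "f (Suc i) < f i" by (metis le_Suc_eq less_irrefl)
    then show ?thesis by (intro exI[of _ i]) simp
  next
    case False
    with Suc.prems show ?thesis by (intro exI[of _ n]) (auto simp: le_Suc_eq)
  qed
qed simp

lemma exists_left_descent:
  assumes w: "w permutes {1..r}" and len: "perm_length r w \<noteq> 0"
  shows "\<exists>i. 1 \<le> i \<and> i < r \<and> inv w (Suc i) < inv w i"
proof -
  have "inversions r w \<noteq> {}"
    using len by (auto simp: perm_length_eq_card_inversions)
  then obtain a b where ab: "(a, b) \<in> inversions r w" by auto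
  then have a: "1 \<le> a" "b \<le> r" "a < b" "w b < w a" by (auto simp: inversions_def)
  then have "inv w (w a) < inv w (w b)" by (simp add: permutes_inverses(2)[OF w])
  then obtain i where i: "w b \<le> i" "i < w a" "inv w (Suc i) < inv w i"
    using exists_descent_between[of "w b" "w a" "inv w"] a(4) by fastforce
  moreover have "w a \<in> {1..r}" "w b \<in> {1..r}"
    using a permutes_in_image[OF w, of a] permutes_in_image[OF w, of b] by auto
  ultimately show ?thesis by (intro exI[of _ i]) auto
qed

lemma reduced_word_permutes: "reduced_word r w ws \<Longrightarrow> w permutes {1..r}"
  using word_perm_permutes by (auto simp: reduced_word_iff)

lemma reduced_word_ConsI:
  assumes u: "reduced_word r (simple_trans i \<circ> w) u" and i: "1 \<le> i" "i < r"
    and desc: "inv w (Suc i) < inv w i"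
  shows "reduced_word r w (i # u)"
proof -
  have w_eq: "w = simple_trans i \<circ> (simple_trans i \<circ> w)" by (simp add: fun_eq_iff)
  have w: "w permutes {1..r}"
    by (subst w_eq, rule permutes_compose[OF reduced_word_permutes[OF u] simple_trans_permutes[OF i]])
  have "Suc (perm_length r (simple_trans i \<circ> w)) = perm_length r w"
    by (rule perm_length_simple_trans_descent[OF w i desc])
  with u i w_eq show ?thesis by (auto simp: reduced_word_iff)
qed

lemma reduced_word_ConsD:
  assumes iu: "reduced_word r w (i # u)"
  shows "reduced_word r (simple_trans i \<circ> w) u" "1 \<le> i" "i < r" "inv w (Suc i) < inv w i"
proof -
  have w: "w permutes {1..r}" by (rule reduced_word_permutes[OF iu])
  show i: "1 \<le> i" "i < r" using iu by (auto simp: reduced_word_iff)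
  have "word_perm u = simple_trans i \<circ> (simple_trans i \<circ> word_perm u)"
    by (simp add: fun_eq_iff)
  also have "simple_trans i \<circ> word_perm u = w" using iu by (simp add: reduced_word_iff)
  finally have u: "set u \<subseteq> {1..<r}" "word_perm u = simple_trans i \<circ> w"
    using iu by (auto simp: reduced_word_iff)
  have len: "Suc (length u) = perm_length r w" using iu by (simp add: reduced_word_iff)
  have "perm_length r (simple_trans i \<circ> w) \<le> length u"
    using perm_length_word_perm_le[OF u(1)] u(2) by simp
  moreover have "inv w i \<noteq> inv w (Suc i)"
    using permutes_inj[OF permutes_inv[OF w]] by (metis injD n_not_Suc_n)
  ultimately show desc: "inv w (Suc i) < inv w i"
    using perm_length_simple_trans_ascent[OF w i] len by fastforce
  show "reduced_word r (simple_trans i \<circ> w) u"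
    using perm_length_simple_trans_descent[OF w i desc] u len by (simp add: reduced_word_iff)
qed

lemma reduced_word_exists:
  assumes "w permutes {1..r}"
  shows "\<exists>ws. reduced_word r w ws"
  using assms
proof (induction "perm_length r w" arbitrary: w)
  case 0
  then have "w = id" by (simp add: perm_length_eq_0_imp_id)
  moreover have "reduced_word r id []" by (simp add: reduced_word_iff)
  ultimately show ?case by blast
next
  case (Suc n)
  obtain i where i: "1 \<le> i" "i < r" "inv w (Suc i) < inv w i"
    using exists_left_descent[OF Suc.prems] Suc.hyps(2) by auto
  have "n = perm_length r (simple_trans i \<circ> w)"
    using perm_length_simple_trans_descent[OF Suc.prems i] Suc.hyps(2) by simp
  moreover have "simple_trans i \<circ> w permutes {1..r}"
    using permutes_compose[OF Suc.prems simple_trans_permutes[OF i(1,2)]] .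
  ultimately obtain u where "reduced_word r (simple_trans i \<circ> w) u"
    using Suc.hyps(1) by blast
  then show ?case using reduced_word_ConsI i by blast
qed

lemma reduced_words_commuting_descents:
  assumes w: "w permutes {1..r}"
    and i: "1 \<le> i" "i < r" "inv w (Suc i) < inv w i"
    and j: "1 \<le> j" "j < r" "inv w (Suc j) < inv w j"
    and far: "Suc i < j \<or> Suc j < i"
  shows "\<exists>u. reduced_word r w (i # j # u) \<and> reduced_word r w (j # i # u)"
proof -
  have comm: "simple_trans i \<circ> (simple_trans j \<circ> w) = simple_trans j \<circ> (simple_trans i \<circ> w)"
    using far by (auto simp: fun_eq_iff simple_trans_apply)
  obtain u where u: "reduced_word r (simple_trans j \<circ> (simple_trans i \<circ> w)) u"
    using reduced_word_exists w i j by (meson simple_trans_comp_permutes)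
  have "reduced_word r w (i # j # u)"
    using u i j far
    by (intro reduced_word_ConsI) (auto simp: inv_simple_trans_comp_apply[OF w] simple_trans_apply)
  moreover have "reduced_word r w (j # i # u)"
    using u i j far unfolding comm[symmetric]
    by (intro reduced_word_ConsI) (auto simp: inv_simple_trans_comp_apply[OF w] simple_trans_apply)
  ultimately show ?thesis by blast
qed

lemma reduced_words_braid_descents:
  assumes w: "w permutes {1..r}" and i: "1 \<le> i" "Suc i < r"
    and desc: "inv w (Suc i) < inv w i" "inv w (Suc (Suc i)) < inv w (Suc i)"
  shows "\<exists>u. reduced_word r w (i # Suc i # i # u) \<and> reduced_word r w (Suc i # i # Suc i # u)"
proof -
  let ?s = simple_trans
  have braid: "?s i \<circ> (?s (Suc i) \<circ> (?s i \<circ> w)) = ?s (Suc i) \<circ> (?s i \<circ> (?s (Suc i) \<circ> w))"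
    by (auto simp: fun_eq_iff simple_trans_apply)
  have w1: "?s i \<circ> w permutes {1..r}" "?s (Suc i) \<circ> w permutes {1..r}"
    using simple_trans_comp_permutes[OF w, of i] simple_trans_comp_permutes[OF w, of "Suc i"] i
    by simp_all
  have "?s i \<circ> (?s (Suc i) \<circ> (?s i \<circ> w)) permutes {1..r}"
    using simple_trans_comp_permutes[OF simple_trans_comp_permutes[OF w1(1), of "Suc i"], of i] i
    by simp
  then obtain u where u: "reduced_word r (?s i \<circ> (?s (Suc i) \<circ> (?s i \<circ> w))) u"
    using reduced_word_exists by blast
  have "reduced_word r w (i # Suc i # i # u)"
    using u i desc
    by (intro reduced_word_ConsI)
       (auto simp: inv_simple_trans_comp_apply[OF w] inv_simple_trans_comp_apply[OF w1(1)]
         simple_trans_apply)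
  moreover have "reduced_word r w (Suc i # i # Suc i # u)"
    using u i desc unfolding braid
    by (intro reduced_word_ConsI)
       (auto simp: inv_simple_trans_comp_apply[OF w] inv_simple_trans_comp_apply[OF w1(2)]
         simple_trans_apply)
  ultimately show ?thesis by blast
qed

section \<open>Matsumoto's theorem\<close>

definition braid_relations :: "nat \<Rightarrow> (nat \<Rightarrow> 'a::monoid_mult) \<Rightarrow> bool" where
  "braid_relations r T \<longleftrightarrow>
     (\<forall>i j. 1 \<le> i \<longrightarrow> Suc i < j \<longrightarrow> j < r \<longrightarrow> T i * T j = T j * T i) \<and>
     (\<forall>i. 1 \<le> i \<longrightarrow> Suc i < r \<longrightarrow> T i * T (Suc i) * T i = T (Suc i) * T i * T (Suc i))"

lemma prod_list_reduced_words_far_descents: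
  fixes T :: "nat \<Rightarrow> 'a::monoid_mult"
  assumes braid: "braid_relations r T"
    and IH: "\<And>w' a b. length a \<le> length u \<Longrightarrow> reduced_word r w' a \<Longrightarrow> reduced_word r w' b \<Longrightarrow>
      prod_list (map T a) = prod_list (map T b)"
    and iu: "reduced_word r w (i # u)" and jv: "reduced_word r w (j # v)"
    and far: "Suc i < j \<or> Suc j < i"
  shows "prod_list (map T (i # u)) = prod_list (map T (j # v))"
proof -
  note i = reduced_word_ConsD[OF iu] and j = reduced_word_ConsD[OF jv]
  obtain x where x: "reduced_word r w (i # j # x)" "reduced_word r w (j # i # x)"
    using reduced_words_commuting_descents[OF reduced_word_permutes[OF iu] i(2-4) j(2-4) far] by blast
  have "prod_list (map T u) = T j * prod_list (map T x)"
    using IH[OF _ i(1) reduced_word_ConsD(1)[OF x(1)]] by simp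
  moreover have "prod_list (map T v) = T i * prod_list (map T x)"
    using IH[OF _ j(1) reduced_word_ConsD(1)[OF x(2)]]
      reduced_word_length[OF iu] reduced_word_length[OF jv]
    by simp
  moreover have "T i * T j = T j * T i"
    using braid far i(2,3) j(2,3) by (auto simp: braid_relations_def)
  ultimately show ?thesis by (simp add: mult.assoc[symmetric])
qed

lemma prod_list_reduced_words_adjacent_descents:
  fixes T :: "nat \<Rightarrow> 'a::monoid_mult"
  assumes braid: "braid_relations r T"
    and IH: "\<And>w' a b. length a \<le> length u \<Longrightarrow> reduced_word r w' a \<Longrightarrow> reduced_word r w' b \<Longrightarrow>
      prod_list (map T a) = prod_list (map T b)"
    and iu: "reduced_word r w (i # u)" and jv: "reduced_word r w (Suc i # v)"
  shows "prod_list (map T (i # u)) = prod_list (map T (Suc i # v))"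
proof -
  note i = reduced_word_ConsD[OF iu] and j = reduced_word_ConsD[OF jv]
  obtain x where x: "reduced_word r w (i # Suc i # i # x)" "reduced_word r w (Suc i # i # Suc i # x)"
    using reduced_words_braid_descents[OF reduced_word_permutes[OF iu] i(2) j(3) i(4) j(4)] by blast
  have "prod_list (map T u) = T (Suc i) * T i * prod_list (map T x)"
    using IH[OF _ i(1) reduced_word_ConsD(1)[OF x(1)]] by (simp add: mult.assoc)
  moreover have "prod_list (map T v) = T i * T (Suc i) * prod_list (map T x)"
    using IH[OF _ j(1) reduced_word_ConsD(1)[OF x(2)]]
      reduced_word_length[OF iu] reduced_word_length[OF jv]
    by (simp add: mult.assoc)
  moreover have "T i * T (Suc i) * T i = T (Suc i) * T i * T (Suc i)"
    using braid i(2) j(3) by (simp add: braid_relations_def)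
  ultimately show ?thesis by (simp add: mult.assoc[symmetric])
qed

theorem prod_list_reduced_words_eq:
  fixes T :: "nat \<Rightarrow> 'a::monoid_mult"
  assumes braid: "braid_relations r T"
  shows "reduced_word r w ws \<Longrightarrow> reduced_word r w vs \<Longrightarrow> prod_list (map T ws) = prod_list (map T vs)"
proof (induction ws arbitrary: w vs rule: length_induct)
  case (1 ws)
  have len: "length vs = length ws"
    using 1(2,3) by (simp add: reduced_word_length)
  show ?case
  proof (cases ws)
    case Nil
    then show ?thesis using len by simp
  next
    case (Cons i u)
    then obtain j v where vs: "vs = j # v" using len by (cases vs) auto
    note iu = 1(2)[unfolded Cons] and jv = 1(3)[unfolded vs]
    have IH: "prod_list (map T a) = prod_list (map T b)"
      if "length a \<le> length u" "reduced_word r w' a" "reduced_word r w' b" for w' a b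
    proof -
      have "length a < length ws" using that(1) Cons by simp
      then show ?thesis using 1(1) that(2,3) by blast
    qed
    consider "i = j" | "Suc i < j \<or> Suc j < i" | "j = Suc i" | "i = Suc j" by linarith
    then show ?thesis
    proof cases
      case 1
      then have v: "reduced_word r (simple_trans i \<circ> w) v" using reduced_word_ConsD(1)[OF jv] by simp
      show ?thesis using IH[OF _ reduced_word_ConsD(1)[OF iu] v] 1 Cons vs by simp
    next
      case 2
      then show ?thesis using prod_list_reduced_words_far_descents[OF braid IH iu jv] Cons vs by simp
    next
      case 3
      then show ?thesis
        using prod_list_reduced_words_adjacent_descents[OF braid IH iu] jv Cons vs by simp
    next
      case 4
      have "length v = length u" using len Cons vs by simp
      then have IH': "prod_list (map T a) = prod_list (map T b)"
        if "length a \<le> length v" "reduced_word r w' a" "reduced_word r w' b" for w' a b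
        using that \<open>length v = length u\<close> by (intro IH) simp_all
      have "reduced_word r w (Suc j # u)" using iu 4 by simp
      with 4 show ?thesis
        using prod_list_reduced_words_adjacent_descents[OF braid IH' jv] Cons vs by simp
    qed
  qed
qed

lemma Tw_eq_prod_list:
  assumes "braid_relations r T" and "reduced_word r w ws"
  shows "Tw r T w = prod_list (map T ws)"
  unfolding Tw_def
  by (rule prod_list_reduced_words_eq[OF assms(1) someI[of "reduced_word r w"] assms(2)])
    (fact assms(2))

section \<open>Coset decomposition of the symmetrizers\<close>

definition coset_rep :: "nat \<Rightarrow> nat \<Rightarrow> nat \<Rightarrow> nat" where
  "coset_rep R k = word_perm (rev [k..<R])"

lemma coset_rep_apply:
  "k \<le> R \<Longrightarrow> coset_rep R k x = (if x < k \<or> R < x then x else if x = k then R else x - 1)"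
proof (induction "R - k" arbitrary: k x)
  case (Suc d)
  then have "k < R" by simp
  then have "coset_rep R k = coset_rep R (Suc k) \<circ> simple_trans k"
    by (simp add: coset_rep_def upt_rec word_perm_append)
  moreover have "coset_rep R (Suc k) y
      = (if y < Suc k \<or> R < y then y else if y = Suc k then R else y - 1)" for y
    using Suc \<open>k < R\<close> by simp
  ultimately show ?case using \<open>k < R\<close> by (auto simp: simple_trans_apply)
qed (simp add: coset_rep_def)

lemma coset_rep_permutes: "1 \<le> k \<Longrightarrow> coset_rep R k permutes {1..R}"
  unfolding coset_rep_def by (rule word_perm_permutes) auto

lemma perm_length_Suc_eq:
  assumes w: "w permutes {1..n}"
  shows "perm_length (Suc n) w = perm_length n w"
proof -
  have "w (Suc n) = Suc n" using permutes_not_in[OF w] by simp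
  moreover have "w a \<le> n" if "1 \<le> a" "a \<le> n" for a
    using permutes_in_image[OF w, of a] that by simp
  ultimately have "inversions (Suc n) w = inversions n w"
    by (fastforce simp: inversions_def le_Suc_eq)
  then show ?thesis by (simp add: perm_length_eq_card_inversions)
qed

lemma perm_length_comp_coset_rep:
  assumes w: "w permutes {1..n}" and k: "1 \<le> k" "k \<le> Suc n"
  shows "perm_length (Suc n) (w \<circ> coset_rep (Suc n) k) = perm_length n w + (Suc n - k)"
  using k
proof (induction "Suc n - k" arbitrary: k)
  case 0
  then show ?case using perm_length_Suc_eq[OF w] by (simp add: coset_rep_def)
next
  case (Suc d)
  then have kn: "k \<le> n" by simp
  let ?v = "w \<circ> coset_rep (Suc n) (Suc k)"
  have "coset_rep (Suc n) k = coset_rep (Suc n) (Suc k) \<circ> simple_trans k"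
    using kn by (simp add: coset_rep_def upt_rec word_perm_append)
  moreover have "?v permutes {1..Suc n}"
    using permutes_compose[OF coset_rep_permutes permutes_subset[OF w]] by auto
  moreover have "?v k < ?v (Suc k)"
    using coset_rep_apply[of "Suc k" "Suc n"] kn Suc.prems permutes_in_image[OF w, of k]
      permutes_not_in[OF w] by simp
  ultimately have "perm_length (Suc n) (w \<circ> coset_rep (Suc n) k) = Suc (perm_length (Suc n) ?v)"
    using perm_length_comp_simple_trans_ascent[of ?v "Suc n" k] kn Suc.prems
    by (simp add: comp_assoc)
  with Suc kn show ?case by simp
qed

lemma comp_coset_rep_inj:
  assumes w: "w permutes {1..n}" and v: "v permutes {1..n}" and km: "k \<in> {1..Suc n}" "m \<in> {1..Suc n}"
    and eq: "w \<circ> coset_rep (Suc n) k = v \<circ> coset_rep (Suc n) m"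
  shows "w = v \<and> k = m"
proof -
  have "v (coset_rep (Suc n) m k) = Suc n"
    using fun_cong[OF eq, of k] coset_rep_apply[of k "Suc n" k] km permutes_not_in[OF w] by simp
  then have "coset_rep (Suc n) m k = Suc n"
    using permutes_in_image[OF v, of "coset_rep (Suc n) m k"] permutes_not_in[OF v]
    by (cases "coset_rep (Suc n) m k \<in> {1..n}") auto
  then have "k = m" using coset_rep_apply[of m "Suc n" k] km by (auto split: if_splits)
  moreover have "w = v"
  proof
    fix x
    have d: "coset_rep (Suc n) k permutes {1..Suc n}" using km by (intro coset_rep_permutes) auto
    have "w (coset_rep (Suc n) k (inv (coset_rep (Suc n) k) x)) =
        v (coset_rep (Suc n) k (inv (coset_rep (Suc n) k) x))"
      using eq \<open>k = m\<close> by (simp add: fun_eq_iff)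
    then show "w x = v x" using permutes_inverses(1)[OF d] by simp
  qed
  ultimately show ?thesis by simp
qed

lemma bij_betw_comp_coset_rep:
  "bij_betw (\<lambda>(w, k). w \<circ> coset_rep (Suc n) k)
     ({w. w permutes {1..n}} \<times> {1..Suc n}) {w. w permutes {1..Suc n}}"
proof -
  let ?h = "\<lambda>(w, k). w \<circ> coset_rep (Suc n) k" and ?A = "{w. w permutes {1..n}} \<times> {1..Suc n}"
  have inj: "inj_on ?h ?A"
  proof (rule inj_onI)
    fix p p' assume p: "p \<in> ?A" "p' \<in> ?A" and eq: "?h p = ?h p'"
    obtain w k v m where "p = (w, k)" "p' = (v, m)" by (cases p, cases p')
    then show "p = p'" using comp_coset_rep_inj[of w n v k m] p eq by auto
  qed
  have sub: "?h ` ?A \<subseteq> {w. w permutes {1..Suc n}}"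
  proof clarify
    fix w k assume "w permutes {1..n}" "k \<in> {1..Suc n}"
    then have "w permutes {1..Suc n}" "1 \<le> k" using permutes_subset[of w "{1..n}"] by auto
    then show "w \<circ> coset_rep (Suc n) k permutes {1..Suc n}"
      using permutes_compose[OF coset_rep_permutes] by simp
  qed
  have "card (?h ` ?A) = card {w. w permutes {1..Suc n}}"
    using card_image[OF inj] card_permutations[of "{1..n}" n]
      card_permutations[of "{1..Suc n}" "Suc n"]
    by (simp add: card_cartesian_product)
  then have "?h ` ?A = {w. w permutes {1..Suc n}}"
    using card_subset_eq[OF _ sub] finite_permutations[of "{1..Suc n}"] by simp
  with inj show ?thesis by (simp add: bij_betw_def)
qed

lemma sum_permutes_Suc:
  fixes F :: "(nat \<Rightarrow> nat) \<Rightarrow> 'a::comm_monoid_add"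
  shows "(\<Sum>w | w permutes {1..Suc n}. F w) =
     (\<Sum>w | w permutes {1..n}. \<Sum>k = 1..Suc n. F (w \<circ> coset_rep (Suc n) k))"
proof -
  have "(\<Sum>w | w permutes {1..Suc n}. F w)
      = (\<Sum>(w, k) \<in> {w. w permutes {1..n}} \<times> {1..Suc n}. F (w \<circ> coset_rep (Suc n) k))"
    using sum.reindex_bij_betw[OF bij_betw_comp_coset_rep, of F n] by (simp add: case_prod_beta)
  then show ?thesis by (simp only: sum.cartesian_product)
qed

lemma braid_relations_Suc_D: "braid_relations (Suc n) T \<Longrightarrow> braid_relations n T"
  unfolding braid_relations_def by auto

definition descending_prod :: "(nat \<Rightarrow> 'a::monoid_mult) \<Rightarrow> nat \<Rightarrow> nat \<Rightarrow> 'a" where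
  "descending_prod T m k = prod_list (map T (rev [k..<m]))"

lemma Tw_comp_coset_rep:
  assumes br: "braid_relations (Suc n) T" and w: "w permutes {1..n}" and k: "1 \<le> k" "k \<le> Suc n"
  shows "Tw (Suc n) T (w \<circ> coset_rep (Suc n) k) = Tw n T w * descending_prod T (Suc n) k"
proof -
  obtain ws where ws: "reduced_word n w ws" using reduced_word_exists[OF w] by blast
  then have "reduced_word (Suc n) (w \<circ> coset_rep (Suc n) k) (ws @ rev [k..<Suc n])"
    using k perm_length_comp_coset_rep[OF w k]
    by (auto simp: reduced_word_iff word_perm_append coset_rep_def)
  then show ?thesis
    using Tw_eq_prod_list[OF br] Tw_eq_prod_list[OF braid_relations_Suc_D[OF br] ws]
    by (simp add: descending_prod_def)
qed

definition weighted_sym :: "nat \<Rightarrow> 'a::ring_1 \<Rightarrow> (nat \<Rightarrow> 'a) \<Rightarrow> 'a" where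
  "weighted_sym r b T = (\<Sum>w | w permutes {1..r}. b ^ perm_length r w * Tw r T w)"

lemma x_sym_eq_weighted_sym: "x_sym r T = weighted_sym r 1 T"
  by (simp add: x_sym_def weighted_sym_def)

lemma y_sym_eq_weighted_sym: "y_sym r qinv T = weighted_sym r (- qinv) T"
  by (simp add: y_sym_def weighted_sym_def)

lemma weighted_sym_0 [simp]: "weighted_sym 0 b T = 1"
proof -
  have "{w. w permutes {1..0::nat}} = {id}" by auto
  moreover have "reduced_word 0 id []" by (simp add: reduced_word_iff)
  ultimately show ?thesis
    using Tw_eq_prod_list[of 0 T id "[]"] by (simp add: weighted_sym_def braid_relations_def)
qed

lemma weighted_sym_Suc:
  fixes T :: "nat \<Rightarrow> 'a::ring_1"
  assumes br: "braid_relations (Suc n) T" and central: "\<And>x. b * x = x * b"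
  shows "weighted_sym (Suc n) b T =
    weighted_sym n b T * (\<Sum>k = 1..Suc n. b ^ (Suc n - k) * descending_prod T (Suc n) k)"
proof -
  have "b ^ perm_length (Suc n) (w \<circ> coset_rep (Suc n) k) * Tw (Suc n) T (w \<circ> coset_rep (Suc n) k)
      = (b ^ perm_length n w * Tw n T w) * (b ^ (Suc n - k) * descending_prod T (Suc n) k)"
    if "w permutes {1..n}" "k \<in> {1..Suc n}" for w k
  proof -
    have k: "1 \<le> k" "k \<le> Suc n" using that(2) by auto
    have "b ^ perm_length (Suc n) (w \<circ> coset_rep (Suc n) k) * Tw (Suc n) T (w \<circ> coset_rep (Suc n) k)
        = b ^ perm_length n w * (b ^ (Suc n - k) * Tw n T w) * descending_prod T (Suc n) k"
      by (simp only: perm_length_comp_coset_rep[OF that(1) k] Tw_comp_coset_rep[OF br that(1) k]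
          power_add mult.assoc)
    also have "b ^ (Suc n - k) * Tw n T w = Tw n T w * b ^ (Suc n - k)"
      using central by (metis power_commuting_commutes)
    finally show ?thesis by (simp only: mult.assoc)
  qed
  then have "weighted_sym (Suc n) b T = (\<Sum>w | w permutes {1..n}. \<Sum>k = 1..Suc n.
      (b ^ perm_length n w * Tw n T w) * (b ^ (Suc n - k) * descending_prod T (Suc n) k))"
    unfolding weighted_sym_def sum_permutes_Suc by (intro sum.cong refl) auto
  then show ?thesis
    unfolding weighted_sym_def sum_distrib_right by (simp only: sum_distrib_left)
qed

section \<open>Rearranging the double sums\<close>

lemma sum_upper_triangle_swap:
  fixes f :: "nat \<Rightarrow> nat \<Rightarrow> 'a::comm_monoid_add"
  shows "(\<Sum>k = 1..N. \<Sum>j\<in>{k..<N}. f k (Suc j)) = (\<Sum>l = 1..N. \<Sum>k\<in>{1..<l}. f k l)"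
proof -
  have "(\<Sum>k = 1..N. \<Sum>j\<in>{k..<N}. f k (Suc j)) = (\<Sum>k = 1..N. \<Sum>l\<in>{l \<in> {1..N}. k < l}. f k l)"
  proof (rule sum.cong[OF refl])
    fix k assume "k \<in> {1..N}"
    then have "{l \<in> {1..N}. k < l} = {Suc k..<Suc N}" by auto
    then show "(\<Sum>j\<in>{k..<N}. f k (Suc j)) = (\<Sum>l\<in>{l \<in> {1..N}. k < l}. f k l)"
      by (simp only: sum.shift_bounds_Suc_ivl)
  qed
  also have "\<dots> = (\<Sum>l = 1..N. \<Sum>k\<in>{k \<in> {1..N}. k < l}. f k l)"
    by (rule sum.swap_restrict) simp_all
  also have "\<dots> = (\<Sum>l = 1..N. \<Sum>k\<in>{1..<l}. f k l)"
    by (intro sum.cong refl arg_cong2[where f = sum]) auto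
  finally show ?thesis .
qed

lemma sum_split_at:
  fixes F :: "nat \<Rightarrow> 'a::comm_monoid_add"
  assumes "1 \<le> l" "l \<le> N"
  shows "(\<Sum>a = 1..N. F a) = (\<Sum>a\<in>{1..<l}. F a) + F l + (\<Sum>a = Suc l..N. F a)"
proof -
  have "{1..N} = insert l ({1..<l} \<union> {Suc l..N})" using assms by auto
  moreover have "sum F ({1..<l} \<union> {Suc l..N}) = sum F {1..<l} + sum F {Suc l..N}"
    by (rule sum.union_disjoint) auto
  ultimately show ?thesis by (simp add: add_ac)
qed

(* The term of row k with factor \<theta> j k belongs to row j + 1; after moving it there,
   rearranged_coeff \<alpha> \<gamma> \<gamma>' \<theta> l a is the coefficient of W l a. *)
definition rearranged_coeff ::
    "(nat \<Rightarrow> 'a::ring_1) \<Rightarrow> (nat \<Rightarrow> 'a) \<Rightarrow> 'a \<Rightarrow> (nat \<Rightarrow> nat \<Rightarrow> 'a) \<Rightarrow> nat \<Rightarrow> nat \<Rightarrow> 'a" where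
  "rearranged_coeff \<alpha> \<gamma> \<gamma>' \<theta> l a =
    (if a < l then \<alpha> l * \<gamma> a + \<alpha> a * \<gamma> (l - 1) * \<theta> (l - 1) a
     else if a = l then \<alpha> l * \<gamma>' - (\<Sum>k\<in>{1..<l}. \<alpha> k * \<gamma> (l - 1) * \<theta> (l - 1) k)
     else \<alpha> l * \<gamma> (a - 1))"

lemma sum_rows_rearrange:
  fixes \<alpha> \<gamma> :: "nat \<Rightarrow> 'a::ring_1" and \<theta> W :: "nat \<Rightarrow> nat \<Rightarrow> 'a"
  shows "(\<Sum>k = 1..N. \<alpha> k * ((\<Sum>j\<in>{1..<k}. \<gamma> j * W k j)
      + (\<Sum>j\<in>{k..<N}. \<gamma> j * (W k (Suc j) + \<theta> j k * (W (Suc j) k - W (Suc j) (Suc j))))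
      + \<gamma>' * W k k))
    = (\<Sum>l = 1..N. \<Sum>a = 1..N. rearranged_coeff \<alpha> \<gamma> \<gamma>' \<theta> l a * W l a)"
proof -
  define cross where "cross k l = \<alpha> k * \<gamma> (l - 1) * \<theta> (l - 1) k * (W l k - W l l)" for k l
  define own where "own l = (\<Sum>a\<in>{1..<l}. \<alpha> l * \<gamma> a * W l a) + \<alpha> l * \<gamma>' * W l l
      + (\<Sum>a = Suc l..N. \<alpha> l * \<gamma> (a - 1) * W l a)" for l
  have row: "\<alpha> k * ((\<Sum>j\<in>{1..<k}. \<gamma> j * W k j)
      + (\<Sum>j\<in>{k..<N}. \<gamma> j * (W k (Suc j) + \<theta> j k * (W (Suc j) k - W (Suc j) (Suc j))))
      + \<gamma>' * W k k) = own k + (\<Sum>j\<in>{k..<N}. cross k (Suc j))" for k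
  proof -
    have "(\<Sum>j\<in>{k..<N}. \<alpha> k * (\<gamma> j * W k (Suc j))) = (\<Sum>a = Suc k..N. \<alpha> k * \<gamma> (a - 1) * W k a)"
      using sum.shift_bounds_Suc_ivl[of "\<lambda>a. \<alpha> k * \<gamma> (a - 1) * W k a" k N]
      by (simp add: atLeastLessThanSuc_atLeastAtMost mult.assoc)
    then show ?thesis
      by (simp add: own_def cross_def distrib_left sum.distrib sum_distrib_left mult.assoc add_ac)
  qed
  have collect: "own l + (\<Sum>k\<in>{1..<l}. cross k l)
      = (\<Sum>a = 1..N. rearranged_coeff \<alpha> \<gamma> \<gamma>' \<theta> l a * W l a)"
    if "l \<in> {1..N}" for l
  proof -
    let ?c = "rearranged_coeff \<alpha> \<gamma> \<gamma>' \<theta> l"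
    have "(\<Sum>a\<in>{1..<l}. ?c a * W l a)
        = (\<Sum>a\<in>{1..<l}. \<alpha> l * \<gamma> a * W l a) + (\<Sum>k\<in>{1..<l}. \<alpha> k * \<gamma> (l - 1) * \<theta> (l - 1) k * W l k)"
      by (simp add: rearranged_coeff_def distrib_right sum.distrib)
    moreover have "(\<Sum>a = Suc l..N. ?c a * W l a) = (\<Sum>a = Suc l..N. \<alpha> l * \<gamma> (a - 1) * W l a)"
      by (intro sum.cong refl) (simp add: rearranged_coeff_def)
    moreover have "?c l * W l l = \<alpha> l * \<gamma>' * W l l
        - (\<Sum>k\<in>{1..<l}. \<alpha> k * \<gamma> (l - 1) * \<theta> (l - 1) k) * W l l"
      by (simp add: rearranged_coeff_def left_diff_distrib)
    ultimately show ?thesis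
      using sum_split_at[of l N "\<lambda>a. ?c a * W l a"] that
      by (simp add: own_def cross_def right_diff_distrib sum_subtractf sum_distrib_right mult.assoc
          algebra_simps)
  qed
  have "(\<Sum>k = 1..N. own k + (\<Sum>j\<in>{k..<N}. cross k (Suc j)))
      = (\<Sum>l = 1..N. own l) + (\<Sum>l = 1..N. \<Sum>k\<in>{1..<l}. cross k l)"
    by (simp only: sum.distrib sum_upper_triangle_swap)
  also have "\<dots> = (\<Sum>l = 1..N. own l + (\<Sum>k\<in>{1..<l}. cross k l))"
    by (simp only: sum.distrib)
  also have "\<dots> = (\<Sum>l = 1..N. \<Sum>a = 1..N. rearranged_coeff \<alpha> \<gamma> \<gamma>' \<theta> l a * W l a)"
    by (rule sum.cong[OF refl collect])
  finally show ?thesis by (simp only: row)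
qed

lemma sum_geometric_tail:
  fixes q :: "'a::comm_ring_1"
  shows "1 \<le> l \<Longrightarrow> l \<le> Suc m \<Longrightarrow> (\<Sum>k\<in>{1..<l}. (q - 1) * q ^ (m - k)) = q ^ m - q ^ (Suc m - l)"
proof (induction l)
  case (Suc l)
  show ?case
  proof (cases "l = 0")
    case False
    then have "Suc m - l = Suc (m - l)" using Suc.prems by simp
    with Suc False show ?thesis by (simp add: algebra_simps)
  qed simp
qed simp

lemma sum_geometric_head:
  fixes q :: "'a::comm_ring_1"
  shows "1 \<le> l \<Longrightarrow> (\<Sum>k\<in>{1..<l}. (q - 1) * q ^ (k - 1)) = q ^ (l - 1) - 1"
proof (induction l)
  case (Suc l)
  show ?case
  proof (cases "l = 0")
    case False
    then have "q ^ l = q * q ^ (l - 1)" by (metis Suc_pred' not_gr_zero power_Suc)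
    with Suc False show ?thesis by (simp add: algebra_simps)
  qed simp
qed simp

lemma neg_inverse_power_identity:
  fixes x y :: "'a::comm_ring_1"
  assumes xy: "x * y = 1" and jk: "1 \<le> j" "j < k" "k \<le> M"
  shows "(- y) ^ (M - j) * ((- 1) ^ (k - 1 - j) * x ^ (k - 1)) = - ((- y) ^ (M - k) * x ^ (j - 1))"
proof -
  obtain d where d: "k - j = Suc d" using jk by (metis Suc_diff_Suc)
  have "(- y) ^ Suc d * ((- 1) ^ d * x ^ Suc d) = - (((- 1) ^ d * (- 1) ^ d) * (x * y) ^ Suc d)"
    by (simp only: power_minus[of y] power_mult_distrib) (simp add: algebra_simps)
  also have "\<dots> = - 1" using xy by simp
  finally have key: "(- y) ^ Suc d * ((- 1) ^ d * x ^ Suc d) = - 1" .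
  have "M - j = (M - k) + Suc d" "k - 1 = (j - 1) + Suc d" "k - 1 - j = d" using d jk by auto
  then have "(- y) ^ (M - j) * ((- 1) ^ (k - 1 - j) * x ^ (k - 1))
      = (- y) ^ (M - k) * x ^ (j - 1) * ((- y) ^ Suc d * ((- 1) ^ d * x ^ Suc d))"
    by (simp only: power_add) (simp add: algebra_simps)
  then show ?thesis unfolding key by simp
qed

lemma x_rearranged_coeff:
  fixes q :: "'a::comm_ring_1"
  assumes l: "1 \<le> l" "l \<le> Suc m" and a: "1 \<le> a" "a \<le> Suc m"
  shows "rearranged_coeff (\<lambda>k. 1 ^ (Suc m - k)) (\<lambda>j. q ^ (m - j)) (q ^ m)
      (\<lambda>j k. (q - 1) * q ^ (j - k)) l a
    = 1 ^ (Suc m - l) * q ^ (Suc m - a)"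
proof -
  have cross:
    "1 ^ (Suc m - k) * q ^ (m - (l - 1)) * ((q - 1) * q ^ (l - 1 - k)) = (q - 1) * q ^ (m - k)"
    if "k < l" for k
  proof -
    have "m - k = (m - (l - 1)) + (l - 1 - k)" using that l by auto
    then show ?thesis by (simp add: power_add algebra_simps)
  qed
  consider "a < l" | "a = l" | "l < a" by linarith
  then show ?thesis
  proof cases
    case 1
    then have "rearranged_coeff (\<lambda>k. 1 ^ (Suc m - k)) (\<lambda>j. q ^ (m - j)) (q ^ m)
        (\<lambda>j k. (q - 1) * q ^ (j - k)) l a
        = 1 ^ (Suc m - l) * q ^ (m - a) + (q - 1) * q ^ (m - a)"
      by (simp only: rearranged_coeff_def if_P cross)
    also have "\<dots> = q ^ (Suc m - a)" using 1 l by (simp add: Suc_diff_le algebra_simps)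
    finally show ?thesis by simp
  next
    case 2
    have "(\<Sum>k\<in>{1..<l}. 1 ^ (Suc m - k) * q ^ (m - (l - 1)) * ((q - 1) * q ^ (l - 1 - k)))
        = (\<Sum>k\<in>{1..<l}. (q - 1) * q ^ (m - k))"
      by (intro sum.cong refl, rule cross) auto
    with 2 show ?thesis
      using sum_geometric_tail[OF l, of q] by (simp add: rearranged_coeff_def)
  next
    case 3
    then show ?thesis by (simp add: rearranged_coeff_def)
  qed
qed

lemma y_rearranged_coeff:
  fixes q q' :: "'a::comm_ring_1"
  assumes q': "q * q' = 1" and l: "1 \<le> l" "l \<le> Suc m" and a: "1 \<le> a" "a \<le> Suc m"
  shows "rearranged_coeff (\<lambda>k. (- q') ^ (Suc m - k)) (\<lambda>j. q ^ j) 1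
      (\<lambda>j k. (q - 1) * (- 1) ^ (j - k)) l a
    = (- q') ^ (Suc m - l) * q ^ (a - 1)"
proof -
  have cross: "(- q') ^ (Suc m - k) * q ^ (l - 1) * ((q - 1) * (- 1) ^ (l - 1 - k))
      = - ((q - 1) * ((- q') ^ (Suc m - l) * q ^ (k - 1)))" if "1 \<le> k" "k < l" for k
    using neg_inverse_power_identity[OF q' that l(2)] by (simp add: algebra_simps)
  consider "a < l" | "a = l" | "l < a" by linarith
  then show ?thesis
  proof cases
    case 1
    then have "rearranged_coeff (\<lambda>k. (- q') ^ (Suc m - k)) (\<lambda>j. q ^ j) 1
        (\<lambda>j k. (q - 1) * (- 1) ^ (j - k)) l a
        = (- q') ^ (Suc m - l) * q ^ a - (q - 1) * ((- q') ^ (Suc m - l) * q ^ (a - 1))"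
      using cross[OF a(1) 1] by (simp only: rearranged_coeff_def if_P diff_conv_add_uminus)
    also have "q ^ a = q * q ^ (a - 1)"
      using a by (metis Suc_pred' not_gr_zero not_one_le_zero power_Suc)
    finally show ?thesis by (simp add: algebra_simps)
  next
    case 2
    have "(\<Sum>k\<in>{1..<l}. (- q') ^ (Suc m - k) * q ^ (l - 1) * ((q - 1) * (- 1) ^ (l - 1 - k)))
        = (\<Sum>k\<in>{1..<l}. - ((q - 1) * ((- q') ^ (Suc m - l) * q ^ (k - 1))))"
      by (intro sum.cong refl, rule cross) auto
    also have "\<dots> = - ((- q') ^ (Suc m - l) * (\<Sum>k\<in>{1..<l}. (q - 1) * q ^ (k - 1)))"
      by (simp add: sum_negf sum_distrib_left mult_ac)
    also have "\<dots> = - ((- q') ^ (Suc m - l) * (q ^ (l - 1) - 1))"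
      by (simp only: sum_geometric_head[OF l(1)])
    finally show ?thesis using 2 by (simp add: rearranged_coeff_def algebra_simps)
  next
    case 3
    then show ?thesis by (simp add: rearranged_coeff_def)
  qed
qed

section \<open>The Hecke-Clifford relations\<close>

lemma commute_prod_list:
  fixes x :: "'a::monoid_mult"
  shows "(\<And>y. y \<in> set ys \<Longrightarrow> x * y = y * x) \<Longrightarrow> x * prod_list ys = prod_list ys * x"
proof (induction ys)
  case (Cons y ys)
  then have xy: "x * y = y * x" and IH: "x * prod_list ys = prod_list ys * x" by simp_all
  have "x * prod_list (y # ys) = (x * y) * prod_list ys" by (simp add: mult.assoc)
  also have "\<dots> = y * (x * prod_list ys)" by (simp add: xy mult.assoc)
  also have "\<dots> = prod_list (y # ys) * x" by (simp add: IH mult.assoc)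
  finally show ?case .
qed simp

lemma prod_lists_commute:
  fixes xs ys :: "'a::monoid_mult list"
  assumes "\<And>x y. x \<in> set xs \<Longrightarrow> y \<in> set ys \<Longrightarrow> x * y = y * x"
  shows "prod_list xs * prod_list ys = prod_list ys * prod_list xs"
  using assms by (intro commute_prod_list[symmetric]) (auto intro: commute_prod_list)

lemma mult_prod_list_eigen:
  fixes X \<epsilon> :: "'a::monoid_mult"
  shows "(\<And>y. y \<in> set ys \<Longrightarrow> X * y = \<epsilon> * X) \<Longrightarrow> X * prod_list ys = \<epsilon> ^ length ys * X"
proof (induction ys)
  case (Cons y ys)
  then have Xy: "X * y = \<epsilon> * X" and IH: "X * prod_list ys = \<epsilon> ^ length ys * X" by simp_all
  have "X * prod_list (y # ys) = (X * y) * prod_list ys" by (simp add: mult.assoc)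
  also have "\<dots> = \<epsilon> * (X * prod_list ys)" by (simp add: Xy mult.assoc)
  also have "\<dots> = \<epsilon> ^ length (y # ys) * X" by (simp add: IH mult.assoc)
  finally show ?case .
qed simp

lemma descending_prod_self [simp]: "descending_prod T m m = 1"
  by (simp add: descending_prod_def)

lemma descending_prod_split:
  assumes "k \<le> j" "j < m"
  shows "descending_prod T m k = descending_prod T m (Suc j) * T j * descending_prod T j k"
proof -
  have "[k..<m] = [k..<j] @ j # [Suc j..<m]"
    using assms by (metis le_Suc_ex upt_add_eq_append upt_conv_Cons less_imp_le_nat)
  then show ?thesis by (simp add: descending_prod_def mult.assoc)
qed

lemma descending_prod_Suc: "k < m \<Longrightarrow> descending_prod T m k = descending_prod T m (Suc k) * T k"
  using descending_prod_split[of k k m T] by simp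

lemma sum_eq_except_pair:
  assumes "finite S" "a \<in> S" "b \<in> S" "a \<noteq> b"
    and "\<And>k. k \<in> S \<Longrightarrow> k \<noteq> a \<Longrightarrow> k \<noteq> b \<Longrightarrow> g k = h k" and "g a + g b = h a + h b"
  shows "sum g S = (sum h S :: 'b::comm_monoid_add)"
proof -
  have split: "sum f S = f a + f b + sum f (S - {a} - {b})" for f :: "_ \<Rightarrow> 'b"
    using assms(1-4) by (simp add: sum.remove[of S a] sum.remove[of "S - {a}" b] add.assoc)
  have "sum g (S - {a} - {b}) = sum h (S - {a} - {b})" using assms(5) by (intro sum.cong) auto
  then show ?thesis using assms(6) by (simp add: split[of g] split[of h])
qed

locale central_hom =
  fixes \<phi> :: "'r::comm_ring_1 \<Rightarrow> 'a::ring_1"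
  assumes central_ring_hom: "central_ring_hom \<phi>"
begin

lemma hom_one: "\<phi> 1 = 1"
  and hom_add: "\<phi> (x + y) = \<phi> x + \<phi> y"
  and hom_mult: "\<phi> (x * y) = \<phi> x * \<phi> y"
  and central: "\<phi> x * a = a * \<phi> x"
  using central_ring_hom unfolding central_ring_hom_def by blast+

lemma hom_zero: "\<phi> 0 = 0"
  using hom_add[of 0 0] by simp

lemma hom_uminus: "\<phi> (- x) = - \<phi> x"
  using hom_add[of x "- x"] by (simp add: hom_zero eq_neg_iff_add_eq_0 add.commute)

lemma hom_diff: "\<phi> (x - y) = \<phi> x - \<phi> y"
  using hom_add[of x "- y"] by (simp add: hom_uminus)

lemma hom_power: "\<phi> (x ^ k) = \<phi> x ^ k"
  by (induction k) (simp_all add: hom_one hom_mult)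

lemma hom_sum: "\<phi> (sum f A) = (\<Sum>x\<in>A. \<phi> (f x))"
  using sum_comp_morphism[of \<phi> f A] by (simp add: hom_zero hom_add comp_def)

lemmas hom_simps = hom_one hom_zero hom_add hom_mult hom_uminus hom_diff hom_power hom_sum

lemma hom_rearranged_coeff:
  "\<phi> (rearranged_coeff \<alpha> \<gamma> \<gamma>' \<theta> l a)
    = rearranged_coeff (\<lambda>k. \<phi> (\<alpha> k)) (\<lambda>j. \<phi> (\<gamma> j)) (\<phi> \<gamma>') (\<lambda>j k. \<phi> (\<theta> j k)) l a"
  by (simp add: rearranged_coeff_def hom_simps)

(* None of the following is [simp]: with two adjacent scalars they rewrite forever. *)
lemma mult_central_left: "a * (\<phi> x * b) = \<phi> x * (a * b)"
  by (simp add: mult.assoc[symmetric] central[of x a])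

lemma central_power: "\<phi> x ^ k * a = a * \<phi> x ^ k"
  using central[of "x ^ k"] by (simp add: hom_power)

lemma mult_central_power_left: "a * (\<phi> x ^ k * b) = \<phi> x ^ k * (a * b)"
  by (simp add: mult.assoc[symmetric] central_power[of x k a])

lemma central_diff_one: "(\<phi> x - 1) * a = a * (\<phi> x - 1)"
  using central[of "x - 1"] by (simp add: hom_diff hom_one)

lemma mult_central_diff_one_left: "a * ((\<phi> x - 1) * b) = (\<phi> x - 1) * (a * b)"
  by (simp add: mult.assoc[symmetric] central_diff_one[of x a])

end

locale hecke_clifford = central_hom \<phi>
  for \<phi> :: "'r::comm_ring_1 \<Rightarrow> 'a::ring_1" +
  fixes q :: 'r and n :: nat and T c :: "nat \<Rightarrow> 'a"
  assumes relations: "HC_relations n (\<phi> q) T c"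
begin

lemma T_quadratic: "1 \<le> i \<Longrightarrow> i < n \<Longrightarrow> T i * T i = \<phi> (q - 1) * T i + \<phi> q"
proof -
  assume "1 \<le> i" "i < n"
  then have "(T i - \<phi> q) * (T i + 1) = 0" using relations by (simp add: HC_relations_def)
  moreover have "T i * T i = (T i - \<phi> q) * (T i + 1) + ((\<phi> q - 1) * T i + \<phi> q)"
    by (simp add: algebra_simps)
  ultimately show ?thesis by (simp add: hom_diff hom_one)
qed

lemma T_far_commute: "1 \<le> i \<Longrightarrow> Suc i < j \<Longrightarrow> j < n \<Longrightarrow> T i * T j = T j * T i"
  using relations by (simp add: HC_relations_def)

lemma braid_relations_le: "m \<le> n \<Longrightarrow> braid_relations m T"
  using relations by (auto simp: braid_relations_def HC_relations_def)

lemma T_braid: "1 \<le> i \<Longrightarrow> Suc i < n \<Longrightarrow> T i * T (Suc i) * T i = T (Suc i) * T i * T (Suc i)"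
  using relations by (simp add: HC_relations_def)

lemma T_c_commute:
  "1 \<le> i \<Longrightarrow> i < n \<Longrightarrow> 1 \<le> j \<Longrightarrow> j \<le> n \<Longrightarrow> j \<noteq> i \<Longrightarrow> j \<noteq> Suc i \<Longrightarrow> T i * c j = c j * T i"
  using relations by (simp add: HC_relations_def)

lemma T_c_same: "1 \<le> i \<Longrightarrow> i < n \<Longrightarrow> T i * c i = c (Suc i) * T i"
  using relations by (simp add: HC_relations_def)

lemma T_c_next: "1 \<le> i \<Longrightarrow> i < n \<Longrightarrow> T i * c (Suc i) = c i * T i - (\<phi> q - 1) * (c i - c (Suc i))"
  using relations by (simp add: HC_relations_def)

abbreviation P :: "nat \<Rightarrow> nat \<Rightarrow> 'a" where
  "P \<equiv> descending_prod T"

lemma c_commute_descending_prod: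
  assumes "1 \<le> k" "M \<le> n" "1 \<le> j" "j \<le> n" "j < k \<or> M < j"
  shows "c j * P M k = P M k * c j"
  unfolding descending_prod_def using assms
  by (intro commute_prod_list) (auto intro!: T_c_commute[symmetric])

lemma c_descending_prod_top:
  assumes "1 \<le> k" "k \<le> M" "M \<le> n"
  shows "c M * P M k = P M k * c k"
  using assms
proof (induction "M - k" arbitrary: M)
  case (Suc d)
  define i where "i = M - 1"
  have i: "M = Suc i" "k \<le> i" using Suc by (auto simp: i_def)
  have "c M * P M k = (c (Suc i) * T i) * P i k"
    using descending_prod_split[of k i M T] i by (simp add: mult.assoc)
  also have "\<dots> = T i * (c i * P i k)"
    using T_c_same[of i, symmetric] i Suc.prems by (simp add: mult.assoc[symmetric])
  also have "c i * P i k = P i k * c k" using Suc i by simp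
  finally show ?case using descending_prod_split[of k i M T] i by (simp add: mult.assoc)
qed simp

lemma T_commute_descending_prod:
  assumes "1 \<le> a" "a < n" "1 \<le> k" "M \<le> n" "Suc a < k \<or> M < a"
  shows "T a * P M k = P M k * T a"
  unfolding descending_prod_def using assms
  by (intro commute_prod_list) (auto intro: T_far_commute T_far_commute[symmetric])

lemma descending_prods_commute:
  assumes "1 \<le> k" "k \<le> j" "j < M" "M \<le> n"
  shows "P M (Suc j) * P j k = P j k * P M (Suc j)"
  unfolding descending_prod_def using assms
  by (intro prod_lists_commute) (auto intro: T_far_commute[symmetric])

lemma descending_prod_braid:
  assumes "1 \<le> k" "k < a" "a < M" "M \<le> n"
  shows "P M k * T a = T (a - 1) * P M k"
proof -
  define i where "i = a - 1"
  have i: "a = Suc i" "k \<le> i" "1 \<le> i" using assms unfolding i_def by auto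
  have split: "P M k = P M (Suc a) * T a * (T i * P i k)"
    using descending_prod_split[of k a M T] descending_prod_split[of k i a T] assms i by simp
  have "P i k * T a = T a * P i k"
    using assms i by (intro T_commute_descending_prod[symmetric]) auto
  then have "P M k * T a = P M (Suc a) * (T a * T i * T a) * P i k"
    unfolding split by (simp add: mult.assoc)
  also have "T a * T i * T a = T i * T a * T i" using T_braid[of i] i assms by simp
  also have "P M (Suc a) * (T i * T a * T i) = T i * (P M (Suc a) * T a * T i)"
    using T_commute_descending_prod[of i "Suc a" M] assms i by (simp add: mult.assoc[symmetric])
  finally show ?thesis unfolding split i_def by (simp add: mult.assoc)
qed

lemma c_descending_prod_inner:
  assumes "1 \<le> k" "k \<le> j" "j < M" "M \<le> n"
  shows "c j * P M k = P M k * c (Suc j) + (\<phi> q - 1) * (P M (Suc j) * P j k * (c k - c (Suc j)))"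
proof -
  let ?U = "P M (Suc j)" and ?L = "P j k"
  have split: "P M k = ?U * T j * ?L" using descending_prod_split[of k j M T] assms by simp
  have cU: "c j * ?U = ?U * c j" using assms by (intro c_commute_descending_prod) auto
  have cT: "c j * T j = T j * c (Suc j) + (\<phi> q - 1) * (c j - c (Suc j))"
    using T_c_next[of j] assms by simp
  have "c j * P M k = (c j * ?U) * T j * ?L" unfolding split by (simp add: mult.assoc)
  also have "\<dots> = ?U * (c j * T j) * ?L" unfolding cU by (simp add: mult.assoc)
  also have "\<dots> = ?U * T j * (c (Suc j) * ?L) + ?U * ((\<phi> q - 1) * (c j - c (Suc j))) * ?L"
    unfolding cT by (simp add: distrib_left distrib_right mult.assoc)
  also have "c (Suc j) * ?L = ?L * c (Suc j)" using assms by (intro c_commute_descending_prod) auto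
  also have "?U * ((\<phi> q - 1) * (c j - c (Suc j))) * ?L
      = (\<phi> q - 1) * (?U * (c j * ?L - c (Suc j) * ?L))"
    by (simp only: mult.assoc mult_central_diff_one_left left_diff_distrib[of "c j" "c (Suc j)" ?L])
  also have "c j * ?L = ?L * c k" using c_descending_prod_top assms by simp
  also have "c (Suc j) * ?L = ?L * c (Suc j)" using assms by (intro c_commute_descending_prod) auto
  finally show ?thesis unfolding split by (simp add: mult.assoc right_diff_distrib)
qed

lemma absorbing_mult_descending_prod:
  assumes X: "\<And>a. 1 \<le> a \<Longrightarrow> a < p \<Longrightarrow> X * T a = \<epsilon> * X" and "1 \<le> k" "j \<le> p"
  shows "X * P j k = \<epsilon> ^ (j - k) * X"
proof -
  have "X * prod_list (map T (rev [k..<j])) = \<epsilon> ^ length (map T (rev [k..<j])) * X"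
    by (rule mult_prod_list_eigen) (use assms in auto)
  then show ?thesis by (simp add: descending_prod_def)
qed

lemma absorbing_mult_c_descending_prod:
  assumes m: "Suc m \<le> n" and X: "\<And>a. 1 \<le> a \<Longrightarrow> a < m \<Longrightarrow> X * T a = \<epsilon> * X"
    and j: "1 \<le> k" "k \<le> j" "j \<le> m"
  shows "X * (c j * P (Suc m) k) = X * P (Suc m) k * c (Suc j)
    + (\<phi> q - 1) * (\<epsilon> ^ (j - k) * (X * P (Suc m) (Suc j) * (c k - c (Suc j))))"
proof -
  have "X * (c j * P (Suc m) k) = X * P (Suc m) k * c (Suc j)
      + (\<phi> q - 1) * (X * P (Suc m) (Suc j) * P j k * (c k - c (Suc j)))"
    using c_descending_prod_inner[of k j "Suc m"] j m
    by (simp add: distrib_left mult_central_diff_one_left mult.assoc)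
  also have "X * P (Suc m) (Suc j) * P j k = (X * P j k) * P (Suc m) (Suc j)"
    using descending_prods_commute[of k j "Suc m"] j m by (simp add: mult.assoc)
  also have "X * P j k = \<epsilon> ^ (j - k) * X"
    using absorbing_mult_descending_prod[OF X] j by simp
  finally show ?thesis by (simp add: mult.assoc)
qed

definition coset_sum :: "'r \<Rightarrow> nat \<Rightarrow> 'a" where
  "coset_sum b M = (\<Sum>k = 1..M. \<phi> (b ^ (M - k)) * P M k)"

lemma weighted_sym_Suc_coset_sum:
  "Suc m \<le> n \<Longrightarrow> weighted_sym (Suc m) (\<phi> b) T = weighted_sym m (\<phi> b) T * coset_sum b (Suc m)"
  using weighted_sym_Suc[OF braid_relations_le central] by (simp add: coset_sum_def hom_power)

(* The hypotheses on b and e hold for (b, e) = (1, q) and (b, e) = (-q^-1, -1): e runs through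
   the two roots of the quadratic relation, which is where that relation enters. *)
lemma coset_pair_absorbs:
  assumes a: "1 \<le> a" "a < M" "M \<le> n"
    and eigen: "b * q = e" "b * (q - 1) + 1 = e * b"
  shows "X * (\<phi> (b ^ (M - a)) * P M a) * T a + X * (\<phi> (b ^ (M - Suc a)) * P M (Suc a)) * T a
     = \<phi> e * (X * (\<phi> (b ^ (M - a)) * P M a) + X * (\<phi> (b ^ (M - Suc a)) * P M (Suc a)))"
proof -
  define t where "t = b ^ (M - Suc a)"
  define U where "U = X * P M a"
  define V where "V = X * P M (Suc a)"
  have UV: "U = V * T a"
    unfolding U_def V_def using descending_prod_Suc[of a M T] a by (simp add: mult.assoc)
  have U_T: "U * T a = \<phi> (q - 1) * U + \<phi> q * V"
  proof -
    have "U * T a = V * (T a * T a)" unfolding UV by (simp add: mult.assoc)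
    also have "\<dots> = V * (\<phi> (q - 1) * T a) + V * \<phi> q"
      using T_quadratic[of a] a by (simp add: distrib_left)
    also have "\<dots> = \<phi> (q - 1) * U + \<phi> q * V"
      unfolding UV mult_central_left central[of q V] ..
    finally show ?thesis .
  qed
  have "b ^ (M - a) = b * t" unfolding t_def using a by (simp add: Suc_diff_Suc power_Suc[symmetric])
  then have lhs: "X * (\<phi> (b ^ (M - a)) * P M a) = \<phi> (b * t) * U"
    unfolding U_def by (simp only: mult_central_left)
  have rhs: "X * (\<phi> (b ^ (M - Suc a)) * P M (Suc a)) = \<phi> t * V"
    unfolding V_def t_def by (rule mult_central_left)
  have "\<phi> (b * t) * U * T a + \<phi> t * V * T a = \<phi> (b * t * (q - 1) + t) * U + \<phi> (b * t * q) * V"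
    unfolding UV[symmetric] mult.assoc U_T
    by (simp add: distrib_left hom_add distrib_right mult.assoc[symmetric] hom_mult[symmetric])
  also have "b * t * (q - 1) + t = (b * (q - 1) + 1) * t" by (simp add: algebra_simps)
  also have "\<dots> = e * (b * t)" using eigen(2) by (simp add: mult.assoc)
  also have "b * t * q = e * t" unfolding eigen(1)[symmetric] by (simp add: mult_ac)
  finally show ?thesis
    unfolding lhs rhs by (simp add: distrib_left mult.assoc[symmetric] hom_mult[symmetric])
qed

lemma coset_term_absorbs:
  assumes m: "Suc m \<le> n" and X: "\<And>a. 1 \<le> a \<Longrightarrow> a < m \<Longrightarrow> X * T a = \<phi> e * X"
    and a: "1 \<le> a" "a < Suc m" and k: "1 \<le> k" "k \<le> Suc m" "k \<noteq> a" "k \<noteq> Suc a"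
  shows "X * (\<phi> \<beta> * P (Suc m) k) * T a = \<phi> e * (X * (\<phi> \<beta> * P (Suc m) k))"
proof -
  obtain a' where a': "1 \<le> a'" "a' < m" "P (Suc m) k * T a = T a' * P (Suc m) k"
  proof (cases "k < a")
    case True
    then show ?thesis using that[of "a - 1"] descending_prod_braid[of k a "Suc m"] a k m by auto
  next
    case False
    then show ?thesis using that[of a] T_commute_descending_prod[of a k "Suc m"] a k m by auto
  qed
  have "X * (\<phi> \<beta> * P (Suc m) k) * T a = \<phi> \<beta> * ((X * T a') * P (Suc m) k)"
    using a'(3) by (simp add: mult_central_left mult.assoc)
  also have "\<dots> = \<phi> \<beta> * (\<phi> e * (X * P (Suc m) k))"
    using X[OF a'(1,2)] by (simp add: mult.assoc)
  also have "\<dots> = \<phi> e * (X * (\<phi> \<beta> * P (Suc m) k))"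
    by (simp only: mult_central_left[of "\<phi> \<beta>"] mult_central_left[of X])
  finally show ?thesis .
qed

lemma coset_sum_absorbs:
  assumes m: "Suc m \<le> n" and X: "\<And>a. 1 \<le> a \<Longrightarrow> a < m \<Longrightarrow> X * T a = \<phi> e * X"
    and eigen: "b * q = e" "b * (q - 1) + 1 = e * b" and a: "1 \<le> a" "a < Suc m"
  shows "X * coset_sum b (Suc m) * T a = \<phi> e * (X * coset_sum b (Suc m))"
proof -
  let ?f = "\<lambda>k. X * (\<phi> (b ^ (Suc m - k)) * P (Suc m) k)"
  have "(\<Sum>k = 1..Suc m. ?f k * T a) = (\<Sum>k = 1..Suc m. \<phi> e * ?f k)"
  proof (rule sum_eq_except_pair[of _ a "Suc a"])
    show "?f a * T a + ?f (Suc a) * T a = \<phi> e * ?f a + \<phi> e * ?f (Suc a)"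
      using coset_pair_absorbs[OF a(1) _ m eigen, of X] a by (simp add: distrib_left)
  qed (use a coset_term_absorbs[OF m X a] in auto)
  then show ?thesis by (simp only: coset_sum_def sum_distrib_left sum_distrib_right)
qed

lemma c_commute_coset_sum:
  assumes "M \<le> n" "M < j" "j \<le> n" and cX: "c j * X = X * c j"
  shows "c j * (X * coset_sum b M) = X * coset_sum b M * c j"
proof -
  have "c j * coset_sum b M = coset_sum b M * c j"
    unfolding coset_sum_def sum_distrib_left sum_distrib_right
  proof (intro sum.cong refl)
    fix k assume "k \<in> {1..M}"
    then have "c j * P M k = P M k * c j" using assms by (intro c_commute_descending_prod) auto
    then show "c j * (\<phi> (b ^ (M - k)) * P M k) = \<phi> (b ^ (M - k)) * P M k * c j"
      by (simp add: mult_central_left mult.assoc)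
  qed
  then show ?thesis by (simp add: mult.assoc[symmetric] cX) (simp add: mult.assoc)
qed

lemma weighted_sym_absorbs:
  assumes eigen: "b * q = e" "b * (q - 1) + 1 = e * b"
  shows "m \<le> n \<Longrightarrow> 1 \<le> a \<Longrightarrow> a < m \<Longrightarrow> weighted_sym m (\<phi> b) T * T a = \<phi> e * weighted_sym m (\<phi> b) T"
proof (induction m arbitrary: a)
  case (Suc m)
  then show ?case
    using coset_sum_absorbs[OF Suc.prems(1) Suc.IH eigen Suc.prems(2,3)]
    by (simp add: weighted_sym_Suc_coset_sum)
qed simp

lemma c_commute_weighted_sym:
  "m \<le> n \<Longrightarrow> m < j \<Longrightarrow> j \<le> n \<Longrightarrow> c j * weighted_sym m (\<phi> b) T = weighted_sym m (\<phi> b) T * c j"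
proof (induction m)
  case (Suc m)
  then show ?case
    using c_commute_coset_sum[OF Suc.prems] by (simp add: weighted_sym_Suc_coset_sum)
qed simp

lemma absorbing_mult_c_sum_descending_prod:
  assumes m: "Suc m \<le> n" and X: "\<And>a. 1 \<le> a \<Longrightarrow> a < m \<Longrightarrow> X * T a = \<phi> e * X"
    and k: "1 \<le> k" "k \<le> Suc m"
  defines "W \<equiv> \<lambda>k a. X * P (Suc m) k * c a"
  shows "X * (((\<Sum>j\<in>{1..<Suc m}. \<phi> (g j) * c j) + \<phi> g' * c (Suc m)) * P (Suc m) k)
    = (\<Sum>j\<in>{1..<k}. \<phi> (g j) * W k j)
      + (\<Sum>j\<in>{k..<Suc m}. \<phi> (g j) *
          (W k (Suc j) + \<phi> ((q - 1) * e ^ (j - k)) * (W (Suc j) k - W (Suc j) (Suc j))))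
      + \<phi> g' * W k k"
proof -
  let ?P = "P (Suc m) k"
  have "X * (((\<Sum>j\<in>{1..<Suc m}. \<phi> (g j) * c j) + \<phi> g' * c (Suc m)) * ?P)
     = (\<Sum>j\<in>{1..<k}. \<phi> (g j) * (X * (c j * ?P))) + (\<Sum>j\<in>{k..<Suc m}. \<phi> (g j) * (X * (c j * ?P)))
       + \<phi> g' * (X * (c (Suc m) * ?P))"
    using sum.atLeastLessThan_concat[of 1 k "Suc m" "\<lambda>j. \<phi> (g j) * (X * (c j * ?P))"] k
    by (simp add: distrib_right distrib_left sum_distrib_left sum_distrib_right mult.assoc
        mult_central_left)
  also have "(\<Sum>j\<in>{1..<k}. \<phi> (g j) * (X * (c j * ?P))) = (\<Sum>j\<in>{1..<k}. \<phi> (g j) * W k j)"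
    using k m by (intro sum.cong refl) (simp add: W_def c_commute_descending_prod mult.assoc)
  also have "(\<Sum>j\<in>{k..<Suc m}. \<phi> (g j) * (X * (c j * ?P)))
    = (\<Sum>j\<in>{k..<Suc m}. \<phi> (g j) *
        (W k (Suc j) + \<phi> ((q - 1) * e ^ (j - k)) * (W (Suc j) k - W (Suc j) (Suc j))))"
    using absorbing_mult_c_descending_prod[OF m X] k
    by (intro sum.cong refl) (simp add: W_def hom_simps right_diff_distrib mult.assoc)
  also have "X * (c (Suc m) * ?P) = W k k"
    using c_descending_prod_top[of k "Suc m"] k m by (simp add: W_def mult.assoc)
  finally show ?thesis .
qed

lemma absorbing_mult_c_sum_coset_sum:
  assumes m: "Suc m \<le> n" and X: "\<And>a. 1 \<le> a \<Longrightarrow> a < m \<Longrightarrow> X * T a = \<phi> e * X"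
    and coeff: "\<And>l a. 1 \<le> l \<Longrightarrow> l \<le> Suc m \<Longrightarrow> 1 \<le> a \<Longrightarrow> a \<le> Suc m \<Longrightarrow>
      rearranged_coeff (\<lambda>k. b ^ (Suc m - k)) g g' (\<lambda>j k. (q - 1) * e ^ (j - k)) l a
        = b ^ (Suc m - l) * d a"
  shows "X * ((\<Sum>j\<in>{1..<Suc m}. \<phi> (g j) * c j) + \<phi> g' * c (Suc m)) * coset_sum b (Suc m)
    = X * coset_sum b (Suc m) * (\<Sum>a = 1..Suc m. \<phi> (d a) * c a)"
proof -
  let ?C = "(\<Sum>j\<in>{1..<Suc m}. \<phi> (g j) * c j) + \<phi> g' * c (Suc m)"
  define W where "W k a = X * P (Suc m) k * c a" for k a
  have "X * ?C * coset_sum b (Suc m)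
      = (\<Sum>k = 1..Suc m. \<phi> (b ^ (Suc m - k)) * (X * (?C * P (Suc m) k)))"
    unfolding coset_sum_def sum_distrib_left by (simp only: mult.assoc mult_central_left)
  also have "\<dots> = (\<Sum>k = 1..Suc m. \<phi> (b ^ (Suc m - k)) * ((\<Sum>j\<in>{1..<k}. \<phi> (g j) * W k j)
      + (\<Sum>j\<in>{k..<Suc m}. \<phi> (g j) *
          (W k (Suc j) + \<phi> ((q - 1) * e ^ (j - k)) * (W (Suc j) k - W (Suc j) (Suc j))))
      + \<phi> g' * W k k))"
    unfolding W_def
    by (intro sum.cong refl arg_cong[where f = "(*) _"] absorbing_mult_c_sum_descending_prod[OF m X])
      auto
  also have "\<dots> = (\<Sum>l = 1..Suc m. \<Sum>a = 1..Suc m. rearranged_coeff (\<lambda>k. \<phi> (b ^ (Suc m - k)))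
      (\<lambda>j. \<phi> (g j)) (\<phi> g') (\<lambda>j k. \<phi> ((q - 1) * e ^ (j - k))) l a * W l a)"
    by (rule sum_rows_rearrange)
  also have "\<dots> = (\<Sum>l = 1..Suc m. \<Sum>a = 1..Suc m. \<phi> (b ^ (Suc m - l) * d a) * W l a)"
    by (intro sum.cong refl) (simp add: hom_rearranged_coeff[symmetric] coeff)
  also have "\<dots> = X * coset_sum b (Suc m) * (\<Sum>a = 1..Suc m. \<phi> (d a) * c a)"
    unfolding coset_sum_def sum_distrib_left[of X] sum_distrib_right
  proof (intro sum.cong refl)
    fix l
    let ?S = "\<Sum>a = 1..Suc m. \<phi> (d a) * c a"
    have "X * P (Suc m) l * ?S = (\<Sum>a = 1..Suc m. \<phi> (d a) * W l a)"
      unfolding W_def sum_distrib_left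
      by (intro sum.cong refl) (simp only: mult.assoc mult_central_left)
    moreover have "X * (\<phi> (b ^ (Suc m - l)) * P (Suc m) l) * ?S
        = \<phi> (b ^ (Suc m - l)) * (X * P (Suc m) l * ?S)"
      by (simp only: mult.assoc mult_central_left)
    ultimately show "(\<Sum>a = 1..Suc m. \<phi> (b ^ (Suc m - l) * d a) * W l a)
        = X * (\<phi> (b ^ (Suc m - l)) * P (Suc m) l) * ?S"
      by (simp only: hom_mult mult.assoc sum_distrib_left)
  qed
  finally show ?thesis .
qed

lemma x_sym_c_q: "m \<le> n \<Longrightarrow> x_sym m T * c_q m (\<phi> q) c = c_q' m (\<phi> q) c * x_sym m T"
proof (induction m)
  case 0
  then show ?case by (simp add: x_sym_eq_weighted_sym c_q_def c_q'_def)
next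
  case (Suc m)
  let ?X = "weighted_sym m (\<phi> 1) T"
  define C where "C = (\<Sum>j\<in>{1..<Suc m}. \<phi> (q ^ (m - j)) * c j) + \<phi> (q ^ m) * c (Suc m)"
  have x_sym: "x_sym k T = weighted_sym k (\<phi> 1) T" for k
    by (simp add: x_sym_eq_weighted_sym hom_one)
  have X: "?X * T a = \<phi> q * ?X" if "1 \<le> a" "a < m" for a
    using weighted_sym_absorbs[of 1 q] Suc.prems that by simp
  have "c_q' (Suc m) (\<phi> q) c * ?X = c_q' m (\<phi> q) c * ?X + \<phi> (q ^ m) * (c (Suc m) * ?X)"
    by (simp add: c_q'_def distrib_right mult.assoc hom_power)
  also have "\<dots> = ?X * C"
    using Suc c_commute_weighted_sym[of m "Suc m"]
    by (simp add: C_def x_sym c_q_def distrib_left mult_central_power_left hom_power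
        atLeastLessThanSuc_atLeastAtMost)
  finally have C: "c_q' (Suc m) (\<phi> q) c * ?X = ?X * C" .
  have "?X * C * coset_sum 1 (Suc m)
      = ?X * coset_sum 1 (Suc m) * (\<Sum>a = 1..Suc m. \<phi> (q ^ (Suc m - a)) * c a)"
    unfolding C_def
    by (rule absorbing_mult_c_sum_coset_sum[OF Suc.prems X]) (assumption | rule x_rearranged_coeff)+
  moreover have "(\<Sum>a = 1..Suc m. \<phi> (q ^ (Suc m - a)) * c a) = c_q (Suc m) (\<phi> q) c"
    by (simp add: c_q_def hom_power)
  ultimately show ?case
    unfolding x_sym weighted_sym_Suc_coset_sum[OF Suc.prems] by (simp add: C mult.assoc[symmetric])
qed

lemma y_sym_c_q:
  assumes q': "q * q' = 1"
  shows "m \<le> n \<Longrightarrow> y_sym m (\<phi> q') T * c_q' m (\<phi> q) c = c_q m (\<phi> q) c * y_sym m (\<phi> q') T"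
proof (induction m)
  case 0
  then show ?case by (simp add: y_sym_eq_weighted_sym c_q_def c_q'_def)
next
  case (Suc m)
  let ?X = "weighted_sym m (\<phi> (- q')) T"
  define C where "C = (\<Sum>j\<in>{1..<Suc m}. \<phi> (q ^ j) * c j) + \<phi> 1 * c (Suc m)"
  have y_sym: "y_sym k (\<phi> q') T = weighted_sym k (\<phi> (- q')) T" for k
    by (simp add: y_sym_eq_weighted_sym hom_uminus)
  have eigen: "- q' * q = - 1" "- q' * (q - 1) + 1 = - 1 * - q'"
    using q' by (simp_all add: algebra_simps)
  have X: "?X * T a = \<phi> (- 1) * ?X" if "1 \<le> a" "a < m" for a
    using weighted_sym_absorbs[OF eigen] Suc.prems that by simp
  have "c_q (Suc m) (\<phi> q) c = \<phi> q * c_q m (\<phi> q) c + c (Suc m)"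
    by (simp add: c_q_def sum_distrib_left mult.assoc[symmetric] Suc_diff_le)
  then have "c_q (Suc m) (\<phi> q) c * ?X = ?X * (\<phi> q * c_q' m (\<phi> q) c + c (Suc m))"
    using Suc c_commute_weighted_sym[of m "Suc m"]
    by (simp add: y_sym distrib_left distrib_right mult.assoc mult_central_left)
  also have "\<phi> q * c_q' m (\<phi> q) c + c (Suc m) = C"
    unfolding C_def c_q'_def sum_distrib_left atLeastLessThanSuc_atLeastAtMost
    by (intro arg_cong2[where f = "(+)"] sum.cong refl)
      (auto simp: hom_power hom_one mult.assoc[symmetric] power_Suc[symmetric] simp del: power_Suc)
  finally have C: "c_q (Suc m) (\<phi> q) c * ?X = ?X * C" .
  have "?X * C * coset_sum (- q') (Suc m)
      = ?X * coset_sum (- q') (Suc m) * (\<Sum>a = 1..Suc m. \<phi> (q ^ (a - 1)) * c a)"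
    unfolding C_def
    by (rule absorbing_mult_c_sum_coset_sum[OF Suc.prems X])
      (assumption | rule y_rearranged_coeff[OF q'])+
  moreover have "(\<Sum>a = 1..Suc m. \<phi> (q ^ (a - 1)) * c a) = c_q' (Suc m) (\<phi> q) c"
    by (simp add: c_q'_def hom_power)
  ultimately show ?case
    unfolding y_sym weighted_sym_Suc_coset_sum[OF Suc.prems] by (simp add: C mult.assoc[symmetric])
qed

end

theorem lemma4p1:
  fixes \<phi> :: "'r::comm_ring_1 \<Rightarrow> 'a::ring_1"
    and q :: 'r and r :: nat
    and T c :: "nat \<Rightarrow> 'a"
  assumes two_nzd: "\<forall>x::'r. 2 * x = 0 \<longrightarrow> x = 0"
    and hom: "central_ring_hom \<phi>"
    and rel: "HC_relations r (\<phi> q) T c"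
    and r1: "r \<ge> 1"
  shows "x_sym r T * c_q r (\<phi> q) c = c_q' r (\<phi> q) c * x_sym r T \<and>
         (\<forall>q'. q * q' = 1 \<longrightarrow>
           y_sym r (\<phi> q') T * c_q' r (\<phi> q) c = c_q r (\<phi> q) c * y_sym r (\<phi> q') T)"
proof -
  interpret hecke_clifford \<phi> q r T c
    using hom rel by (simp add: hecke_clifford_def hecke_clifford_axioms_def central_hom_def)
  show ?thesis using x_sym_c_q y_sym_c_q by blast
qed

end
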